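(* For every integer $k\ge 3$ there exists a $K_3$-WORM-colorable graph $F_k$ such that $W^-(F_k,K_3)=k$.
   Context: A $K_3$-WORM coloring of a graph $G$ is an assignment of colors to the vertices of $G$ such that the three vertices of every triangle ($K_3$-subgraph) of $G$ receive exactly two distinct colors (no triangle is monochromatic or rainbow). $G$ is $K_3$-WORM-colorable if it has such a coloring, and then $W^-(G,K_3)$ is the minimum number of colors used in a $K_3$-WORM coloring of $G$. *)

theory Defs
  imports Main
begin

definition simple_graph :: "'a set \<Rightarrow> ('a \<Rightarrow> 'a \<Rightarrow> bool) \<Rightarrow> bool" where
  "simple_graph V E \<longleftrightarrow> finite V \<and>
     (\<forall>x y. E x y \<longrightarrow> x \<in> V \<and> y \<in> V) \<and>
     (\<forall>x y. E x y \<longrightarrow> E y x) \<and> (\<forall>x. \<not> E x x)"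

definition triangle :: "'a set \<Rightarrow> ('a \<Rightarrow> 'a \<Rightarrow> bool) \<Rightarrow> 'a \<Rightarrow> 'a \<Rightarrow> 'a \<Rightarrow> bool" where
  "triangle V E a b c \<longleftrightarrow> a \<in> V \<and> b \<in> V \<and> c \<in> V \<and>
     a \<noteq> b \<and> b \<noteq> c \<and> a \<noteq> c \<and> E a b \<and> E b c \<and> E a c"

definition K3_worm_coloring :: "'a set \<Rightarrow> ('a \<Rightarrow> 'a \<Rightarrow> bool) \<Rightarrow> ('a \<Rightarrow> nat) \<Rightarrow> bool" where
  "K3_worm_coloring V E f \<longleftrightarrow>
     (\<forall>a b c. triangle V E a b c \<longrightarrow> card {f a, f b, f c} = 2)"

definition K3_worm_colorable :: "'a set \<Rightarrow> ('a \<Rightarrow> 'a \<Rightarrow> bool) \<Rightarrow> bool" where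
  "K3_worm_colorable V E \<longleftrightarrow> (\<exists>f. K3_worm_coloring V E f)"

definition W_minus_K3 :: "'a set \<Rightarrow> ('a \<Rightarrow> 'a \<Rightarrow> bool) \<Rightarrow> nat" where
  "W_minus_K3 V E = (LEAST n. \<exists>f. K3_worm_coloring V E f \<and> card (f ` V) = n)"

end

theory Submission imports Defs "HOL-Library.Countable" begin

text \<open>
In a \<open>K\<^sub>3\<close>-WORM coloring of \<open>K\<^sub>4\<close> no color class has three vertices and no three vertices
are rainbow, so the colors split the four vertices into two pairs. An 8-vertex gadget built from six
\<open>K\<^sub>4\<close>'s exploits this rigidity: its two non-adjacent vertices 0 and 1 receive different colors
in every WORM coloring, while coloring {0, 5, 7} and the remaining vertices with two distinct
colors is WORM, as both classes are triangle-free. Gluing a copy of the gadget onto every pair of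
\<open>k\<close> base vertices creates no new triangles, so the base vertices need \<open>k\<close> distinct colors and
coloring each copy by the colors of its two base vertices uses exactly \<open>k\<close>.
\<close>

lemma card_three_eq_2:
  "card {a, b, c} = 2 \<longleftrightarrow> (a = b \<or> b = c \<or> a = c) \<and> \<not> (a = b \<and> b = c)"
  by (auto simp: card_insert_if)

text \<open>\<open>Defs.triangle\<close> is qualified throughout because \<open>HOL-Library.Countable\<close> also brings
  \<open>Nat_Bijection.triangle\<close> into scope.\<close>

lemma K3_worm_coloring_comp:
  assumes "K3_worm_coloring V' E' f"
    and "\<And>a b c. Defs.triangle V E a b c \<Longrightarrow> Defs.triangle V' E' (h a) (h b) (h c)"
  shows "K3_worm_coloring V E (f \<circ> h)"
  using assms unfolding K3_worm_coloring_def by simp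

lemma K3_worm_coloring_two_colors:
  assumes "f ` V \<subseteq> {p, q}"
    and "\<And>a b c. Defs.triangle V E a b c \<Longrightarrow> \<not> (f a = f b \<and> f b = f c)"
  shows "K3_worm_coloring V E f"
  unfolding K3_worm_coloring_def card_three_eq_2
proof (intro allI impI conjI)
  fix a b c assume abc: "Defs.triangle V E a b c"
  then have "f a \<in> {p, q}" "f b \<in> {p, q}" "f c \<in> {p, q}"
    using assms(1) unfolding Defs.triangle_def by (simp_all add: image_subset_iff)
  then show "f a = f b \<or> f b = f c \<or> f a = f c" by auto
  show "\<not> (f a = f b \<and> f b = f c)" using assms(2) abc .
qed

lemma K4_worm_pairs:
  assumes "card {a, b, c} = 2" "card {a, b, d} = 2" "card {a, c, d} = 2" "card {b, c, d} = 2"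
  shows "(a = b \<and> c = d \<and> a \<noteq> c) \<or> (a = c \<and> b = d \<and> a \<noteq> b) \<or> (a = d \<and> b = c \<and> a \<noteq> b)"
  using assms unfolding card_three_eq_2 by blast

lemma K3_worm_coloring_K4:
  assumes "K3_worm_coloring V E f"
    and "Defs.triangle V E a b c" "Defs.triangle V E a b d" "Defs.triangle V E a c d" "Defs.triangle V E b c d"
  shows "(f a = f b \<and> f c = f d \<and> f a \<noteq> f c) \<or> (f a = f c \<and> f b = f d \<and> f a \<noteq> f b)
    \<or> (f a = f d \<and> f b = f c \<and> f a \<noteq> f b)"
  using assms unfolding K3_worm_coloring_def by (intro K4_worm_pairs) auto

lemma triangle_rotate:
  assumes "symp E" and "Defs.triangle V E a b c"
  shows "Defs.triangle V E b c a"
  using assms unfolding Defs.triangle_def by (blast dest: sympD)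

definition relabel_edges :: "('a \<Rightarrow> 'b) \<Rightarrow> ('a \<Rightarrow> 'a \<Rightarrow> bool) \<Rightarrow> 'b \<Rightarrow> 'b \<Rightarrow> bool" where
  "relabel_edges h E u v \<longleftrightarrow> (\<exists>a b. E a b \<and> u = h a \<and> v = h b)"

lemma relabel_edges_iff: "inj h \<Longrightarrow> relabel_edges h E (h a) (h b) \<longleftrightarrow> E a b"
  by (auto simp: relabel_edges_def dest: injD)

lemma simple_graph_relabel:
  assumes "inj h" and "simple_graph V E"
  shows "simple_graph (h ` V) (relabel_edges h E)"
  using assms unfolding simple_graph_def relabel_edges_def by (auto dest: injD) blast

lemma triangle_relabel_iff:
  assumes "inj h"
  shows "Defs.triangle (h ` V) (relabel_edges h E) (h a) (h b) (h c) \<longleftrightarrow> Defs.triangle V E a b c"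
  using assms unfolding Defs.triangle_def
  by (simp add: relabel_edges_iff inj_image_mem_iff inj_eq)

lemma K3_worm_coloring_relabel_iff:
  assumes h: "inj h"
  shows "K3_worm_coloring (h ` V) (relabel_edges h E) g \<longleftrightarrow> K3_worm_coloring V E (g \<circ> h)"
proof
  assume "K3_worm_coloring (h ` V) (relabel_edges h E) g"
  then show "K3_worm_coloring V E (g \<circ> h)"
    by (rule K3_worm_coloring_comp) (simp add: triangle_relabel_iff[OF h])
next
  assume gh: "K3_worm_coloring V E (g \<circ> h)"
  show "K3_worm_coloring (h ` V) (relabel_edges h E) g"
    unfolding K3_worm_coloring_def
  proof (intro allI impI)
    fix x y z assume xyz: "Defs.triangle (h ` V) (relabel_edges h E) x y z"
    then obtain a b c where abc: "x = h a" "y = h b" "z = h c"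
      unfolding Defs.triangle_def by blast
    with xyz have "Defs.triangle V E a b c"
      using triangle_relabel_iff[OF h] by simp
    with gh show "card {g x, g y, g z} = 2"
      unfolding K3_worm_coloring_def abc by simp
  qed
qed

lemma ex_comp_inj_iff:
  assumes "inj h"
  shows "(\<exists>g. P (g \<circ> h)) \<longleftrightarrow> (\<exists>f. P f)"
proof
  assume "\<exists>f. P f"
  then obtain f where "P f" ..
  moreover have "(f \<circ> inv h) \<circ> h = f"
    using assms by (simp add: comp_assoc)
  ultimately show "\<exists>g. P (g \<circ> h)" by metis
qed blast

lemma K3_worm_colorable_relabel_iff:
  assumes "inj h"
  shows "K3_worm_colorable (h ` V) (relabel_edges h E) \<longleftrightarrow> K3_worm_colorable V E"
  unfolding K3_worm_colorable_def K3_worm_coloring_relabel_iff[OF assms] ex_comp_inj_iff[OF assms] ..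

lemma W_minus_K3_relabel:
  assumes "inj h"
  shows "W_minus_K3 (h ` V) (relabel_edges h E) = W_minus_K3 V E"
proof -
  have "(\<exists>g. K3_worm_coloring V E (g \<circ> h) \<and> card ((g \<circ> h) ` V) = n) \<longleftrightarrow>
      (\<exists>f. K3_worm_coloring V E f \<and> card (f ` V) = n)" for n
    by (rule ex_comp_inj_iff[OF assms])
  then show ?thesis
    unfolding W_minus_K3_def K3_worm_coloring_relabel_iff[OF assms] image_comp by (simp only:)
qed

definition gadget_edges :: "(nat \<times> nat) list" where
  "gadget_edges = [(0, 3), (0, 4), (0, 5), (1, 2), (1, 5), (1, 6), (1, 7), (2, 3), (2, 5), (2, 7),
    (3, 4), (3, 5), (3, 7), (4, 5), (4, 6), (4, 7), (5, 6), (5, 7), (6, 7)]"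

definition gadget :: "nat \<Rightarrow> nat \<Rightarrow> bool" where
  "gadget s t \<longleftrightarrow> (s, t) \<in> set gadget_edges \<or> (t, s) \<in> set gadget_edges"

definition gadget_coloring :: "nat \<Rightarrow> nat \<Rightarrow> nat \<Rightarrow> nat" where
  "gadget_coloring a b s = (if s \<in> {0, 5, 7} then a else b)"

lemma gadget_sym: "gadget s t \<Longrightarrow> gadget t s"
  by (auto simp: gadget_def)

lemma symp_gadget: "symp gadget"
  using gadget_sym by (rule sympI)

lemma gadget_irrefl: "\<not> gadget s s"
  by (auto simp: gadget_def gadget_edges_def)

lemma gadget_less_8: "gadget s t \<Longrightarrow> s < 8 \<and> t < 8"
  by (auto simp: gadget_def gadget_edges_def)

lemma not_gadget_0_1: "\<not> gadget 0 1"
  by (simp add: gadget_def gadget_edges_def)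

lemma gadget_triangle_iff:
  "Defs.triangle {..<8} gadget s t u \<longleftrightarrow> gadget s t \<and> gadget t u \<and> gadget s u"
  unfolding Defs.triangle_def using gadget_less_8 gadget_irrefl by auto

lemma gadget_worm_coloring_ends_distinct:
  assumes f: "K3_worm_coloring {..<8} gadget f"
  shows "f 0 \<noteq> f 1"
proof -
  have K4: "(f a = f b \<and> f c = f d \<and> f a \<noteq> f c) \<or> (f a = f c \<and> f b = f d \<and> f a \<noteq> f b)
      \<or> (f a = f d \<and> f b = f c \<and> f a \<noteq> f b)"
    if "gadget a b" "gadget a c" "gadget a d" "gadget b c" "gadget b d" "gadget c d" for a b c d
    using that by (intro K3_worm_coloring_K4[OF f]) (simp_all add: gadget_triangle_iff)
  note K4_instances = K4[of 0 3 4 5] K4[of 3 4 5 7] K4[of 4 6 5 7] K4[of 1 6 5 7]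
    K4[of 2 3 5 7] K4[of 1 2 5 7]
  \<comment> \<open>Otherwise every \<open>K\<^sub>4\<close> through 5 and 7 puts its two other vertices in different color
    classes, which is impossible along the odd cycle 1, 6, 4, 3, 2.\<close>
  have "f 5 = f 7"
    using K4_instances by (simp add: gadget_def gadget_edges_def) metis
  \<comment> \<open>Now \<open>f 1 = f 6 = f 4 = f 3 \<noteq> f 5\<close>, and the \<open>K\<^sub>4\<close> on 0, 3, 4, 5 forces \<open>f 0 = f 5\<close>.\<close>
  then show ?thesis
    using K4_instances by (simp add: gadget_def gadget_edges_def) metis
qed

lemma gadget_triangle_not_monochromatic:
  assumes "Defs.triangle {..<8} gadget s t u"
  shows "\<not> ((s \<in> {0, 5, 7} \<longleftrightarrow> t \<in> {0, 5, 7}) \<and> (t \<in> {0, 5, 7} \<longleftrightarrow> u \<in> {0, 5, 7}))"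
proof -
  have "\<forall>s<8. \<forall>t<8. \<forall>u<8. gadget s t \<longrightarrow> gadget t u \<longrightarrow> gadget s u \<longrightarrow>
      \<not> ((s \<in> {0, 5, 7} \<longleftrightarrow> t \<in> {0, 5, 7}) \<and> (t \<in> {0, 5, 7} \<longleftrightarrow> u \<in> {0, 5, 7}))"
    by (simp add: All_less_Suc numeral_eq_Suc gadget_def gadget_edges_def)
  then show ?thesis
    using assms unfolding Defs.triangle_def by blast
qed

lemma gadget_coloring_worm:
  assumes "a \<noteq> b"
  shows "K3_worm_coloring {..<8} gadget (gadget_coloring a b)"
proof (rule K3_worm_coloring_two_colors)
  show "gadget_coloring a b ` {..<8} \<subseteq> {a, b}"
    by (auto simp: gadget_coloring_def)
  show "\<not> (gadget_coloring a b s = gadget_coloring a b t \<and> gadget_coloring a b t = gadget_coloring a b u)"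
    if "Defs.triangle {..<8} gadget s t u" for s t u
    using gadget_triangle_not_monochromatic[OF that] assms by (auto simp: gadget_coloring_def)
qed

type_synonym blowup_vertex = "nat + nat \<times> nat \<times> nat"

definition copy_vertex :: "nat \<Rightarrow> nat \<Rightarrow> nat \<Rightarrow> blowup_vertex" where
  "copy_vertex i j s = (if s = 0 then Inl i else if s = 1 then Inl j else Inr (i, j, s))"

definition blowup_vertices :: "nat \<Rightarrow> blowup_vertex set" where
  "blowup_vertices k =
     Inl ` {..<k} \<union> {copy_vertex i j s | i j s. i < j \<and> j < k \<and> s < 8}"

definition blowup_edges :: "nat \<Rightarrow> blowup_vertex \<Rightarrow> blowup_vertex \<Rightarrow> bool" where
  "blowup_edges k x y \<longleftrightarrow>
     (\<exists>i j s t. i < j \<and> j < k \<and> gadget s t \<and> x = copy_vertex i j s \<and> y = copy_vertex i j t)"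

fun blowup_coloring :: "blowup_vertex \<Rightarrow> nat" where
  "blowup_coloring (Inl i) = i"
| "blowup_coloring (Inr (i, j, s)) = gadget_coloring i j s"

lemma copy_vertex_inject: "i \<noteq> j \<Longrightarrow> copy_vertex i j s = copy_vertex i j t \<longleftrightarrow> s = t"
  by (auto simp: copy_vertex_def)

lemma copy_vertex_eq_Inr: "copy_vertex i j s = Inr (a, b, c) \<Longrightarrow> a = i \<and> b = j \<and> c = s"
  by (auto simp: copy_vertex_def split: if_splits)

lemma blowup_coloring_copy_vertex: "blowup_coloring (copy_vertex i j s) = gadget_coloring i j s"
  by (simp add: copy_vertex_def gadget_coloring_def)

lemma finite_blowup_vertices: "finite (blowup_vertices k)"
proof -
  have "{copy_vertex i j s | i j s. i < j \<and> j < k \<and> s < 8} \<subseteq>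
      (\<lambda>(i, j, s). copy_vertex i j s) ` ({..<k} \<times> {..<k} \<times> {..<8})"
    by (force simp: image_iff)
  then show ?thesis
    unfolding blowup_vertices_def by (simp add: finite_subset)
qed

lemma blowup_edges_sym: "blowup_edges k x y \<Longrightarrow> blowup_edges k y x"
  unfolding blowup_edges_def by (blast intro: gadget_sym)

lemma blowup_edges_irrefl: "\<not> blowup_edges k x x"
  unfolding blowup_edges_def using copy_vertex_inject gadget_irrefl by fastforce

lemma blowup_edges_in_vertices: "blowup_edges k x y \<Longrightarrow> x \<in> blowup_vertices k \<and> y \<in> blowup_vertices k"
  unfolding blowup_edges_def blowup_vertices_def using gadget_less_8 by blast

lemma simple_graph_blowup: "simple_graph (blowup_vertices k) (blowup_edges k)"
  unfolding simple_graph_def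
  using finite_blowup_vertices blowup_edges_in_vertices blowup_edges_sym blowup_edges_irrefl by blast

lemma symp_blowup_edges: "symp (blowup_edges k)"
  using blowup_edges_sym by (rule sympI)

definition copy_triangle :: "nat \<Rightarrow> blowup_vertex \<Rightarrow> blowup_vertex \<Rightarrow> blowup_vertex \<Rightarrow> bool" where
  "copy_triangle k x y z \<longleftrightarrow> (\<exists>i j s t u. i < j \<and> j < k \<and> Defs.triangle {..<8} gadget s t u \<and>
     x = copy_vertex i j s \<and> y = copy_vertex i j t \<and> z = copy_vertex i j u)"

lemma copy_triangle_rotate: "copy_triangle k x y z \<Longrightarrow> copy_triangle k y z x"
  unfolding copy_triangle_def using triangle_rotate[OF symp_gadget] by blast

lemma blowup_edges_Inl: "\<not> blowup_edges k (Inl a) (Inl b)"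
  unfolding blowup_edges_def copy_vertex_def
  using gadget_irrefl not_gadget_0_1 gadget_sym by (auto split: if_splits)

lemma blowup_edges_Inr:
  assumes "blowup_edges k (Inr (i, j, s)) y"
  shows "i < j \<and> j < k \<and> Inr (i, j, s) = copy_vertex i j s \<and> (\<exists>t. gadget s t \<and> y = copy_vertex i j t)"
proof -
  obtain i' j' s' t where "i' < j'" "j' < k" "gadget s' t"
    and "Inr (i, j, s) = copy_vertex i' j' s'" "y = copy_vertex i' j' t"
    using assms unfolding blowup_edges_def by blast
  moreover from this have "i = i' \<and> j = j' \<and> s = s'"
    using copy_vertex_eq_Inr by metis
  ultimately show ?thesis by blast
qed

lemma blowup_edges_copy_vertex:
  assumes "i < j" and st: "blowup_edges k (copy_vertex i j s) (copy_vertex i j t)"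
  shows "gadget s t"
proof -
  have adj: "gadget s t"
    if s: "s \<notin> {0, 1}" and e: "blowup_edges k (copy_vertex i j s) (copy_vertex i j t)" for s t
  proof -
    have "copy_vertex i j s = Inr (i, j, s)"
      using s by (simp add: copy_vertex_def)
    then obtain t' where "gadget s t'" "copy_vertex i j t = copy_vertex i j t'"
      using blowup_edges_Inr e by metis
    then show ?thesis
      using copy_vertex_inject \<open>i < j\<close> by simp
  qed
  consider "s \<notin> {0, 1}" | "t \<notin> {0, 1}" | "s \<in> {0, 1}" "t \<in> {0, 1}"
    by blast
  then show ?thesis
  proof cases
    case 3
    then obtain a b where "copy_vertex i j s = Inl a" "copy_vertex i j t = Inl b"
      by (auto simp: copy_vertex_def)
    then show ?thesis
      using st blowup_edges_Inl by metis
  qed (use adj st blowup_edges_sym gadget_sym in blast)+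
qed

lemma blowup_triangle_Inr:
  assumes "Defs.triangle (blowup_vertices k) (blowup_edges k) (Inr (i, j, s)) y z"
  shows "copy_triangle k (Inr (i, j, s)) y z"
proof -
  have xy: "blowup_edges k (Inr (i, j, s)) y" and xz: "blowup_edges k (Inr (i, j, s)) z"
    and yz: "blowup_edges k y z"
    using assms unfolding Defs.triangle_def by blast+
  obtain t u where "i < j" "j < k" "Inr (i, j, s) = copy_vertex i j s"
    and st: "gadget s t" and y: "y = copy_vertex i j t"
    and su: "gadget s u" and z: "z = copy_vertex i j u"
    using blowup_edges_Inr[OF xy] blowup_edges_Inr[OF xz] by blast
  moreover have "gadget t u"
    using blowup_edges_copy_vertex \<open>i < j\<close> yz unfolding y z by blast
  ultimately show ?thesis
    unfolding copy_triangle_def gadget_triangle_iff by blast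
qed

lemma blowup_triangle_in_copy:
  assumes "Defs.triangle (blowup_vertices k) (blowup_edges k) x y z"
  shows "copy_triangle k x y z"
proof -
  note rotate = triangle_rotate[OF symp_blowup_edges]
  have "\<not> (\<exists>a b. x = Inl a \<and> y = Inl b)"
    using assms blowup_edges_Inl unfolding Defs.triangle_def by blast
  then consider (x) i j s where "x = Inr (i, j, s)" | (y) i j s where "y = Inr (i, j, s)"
    | (z) i j s where "z = Inr (i, j, s)"
    by (metis sum.exhaust prod_cases3)
  then show ?thesis
  proof cases
    case x
    then show ?thesis using assms blowup_triangle_Inr by blast
  next
    case y
    then show ?thesis
      using blowup_triangle_Inr[of k i j s z x] rotate[OF assms] copy_triangle_rotate by blast
  next
    case z
    then show ?thesis
      using blowup_triangle_Inr[of k i j s x y] rotate[OF rotate[OF assms]] copy_triangle_rotate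
      by blast
  qed
qed

lemma blowup_triangle_copy_vertex:
  assumes "i < j" "j < k" and "Defs.triangle {..<8} gadget s t u"
  shows "Defs.triangle (blowup_vertices k) (blowup_edges k)
    (copy_vertex i j s) (copy_vertex i j t) (copy_vertex i j u)"
proof -
  have edge: "blowup_edges k (copy_vertex i j a) (copy_vertex i j b)" if "gadget a b" for a b
    unfolding blowup_edges_def using assms(1,2) that by blast
  have "gadget s t" "gadget t u" "gadget s u"
    using assms(3) unfolding gadget_triangle_iff by blast+
  then show ?thesis
    using edge blowup_edges_in_vertices blowup_edges_irrefl unfolding Defs.triangle_def by metis
qed

lemma blowup_coloring_worm: "K3_worm_coloring (blowup_vertices k) (blowup_edges k) blowup_coloring"
  unfolding K3_worm_coloring_def
proof (intro allI impI)
  fix x y z assume "Defs.triangle (blowup_vertices k) (blowup_edges k) x y z"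
  then obtain i j s t u where "i < j" and stu: "Defs.triangle {..<8} gadget s t u"
    and xyz: "x = copy_vertex i j s" "y = copy_vertex i j t" "z = copy_vertex i j u"
    using blowup_triangle_in_copy unfolding copy_triangle_def by meson
  have "card {gadget_coloring i j s, gadget_coloring i j t, gadget_coloring i j u} = 2"
    using gadget_coloring_worm[of i j] stu \<open>i < j\<close> unfolding K3_worm_coloring_def by blast
  then show "card {blowup_coloring x, blowup_coloring y, blowup_coloring z} = 2"
    unfolding xyz blowup_coloring_copy_vertex .
qed

lemma blowup_coloring_image: "blowup_coloring ` blowup_vertices k = {..<k}"
proof
  show "blowup_coloring ` blowup_vertices k \<subseteq> {..<k}"
    by (auto simp: blowup_vertices_def blowup_coloring_copy_vertex gadget_coloring_def)
  show "{..<k} \<subseteq> blowup_coloring ` blowup_vertices k"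
    by (force simp: blowup_vertices_def)
qed

lemma blowup_worm_coloring_card_ge:
  assumes f: "K3_worm_coloring (blowup_vertices k) (blowup_edges k) f"
  shows "k \<le> card (f ` blowup_vertices k)"
proof -
  have "f (Inl i) \<noteq> f (Inl j)" if "i < j" "j < k" for i j
  proof -
    have "K3_worm_coloring {..<8} gadget (f \<circ> copy_vertex i j)"
      using f blowup_triangle_copy_vertex[OF that] by (rule K3_worm_coloring_comp)
    from gadget_worm_coloring_ends_distinct[OF this] show ?thesis
      by (simp add: copy_vertex_def)
  qed
  then have "inj_on (f \<circ> Inl) {..<k}"
    by (intro inj_onI) (metis comp_apply lessThan_iff linorder_neqE_nat)
  then have "card ((f \<circ> Inl) ` {..<k}) = k"
    by (metis card_image card_lessThan)
  moreover have "(f \<circ> Inl) ` {..<k} \<subseteq> f ` blowup_vertices k"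
    by (auto simp: blowup_vertices_def)
  then have "card ((f \<circ> Inl) ` {..<k}) \<le> card (f ` blowup_vertices k)"
    by (simp add: card_mono finite_blowup_vertices)
  ultimately show ?thesis by simp
qed

lemma W_minus_K3_blowup: "W_minus_K3 (blowup_vertices k) (blowup_edges k) = k"
  unfolding W_minus_K3_def
proof (rule Least_equality)
  show "\<exists>f. K3_worm_coloring (blowup_vertices k) (blowup_edges k) f \<and> card (f ` blowup_vertices k) = k"
    using blowup_coloring_worm blowup_coloring_image by (intro exI[of _ blowup_coloring]) simp
qed (use blowup_worm_coloring_card_ge in blast)

theorem mainTheorem3:
  fixes k :: nat
  assumes "k \<ge> 3"
  shows "\<exists>(V :: nat set) E. simple_graph V E \<and> K3_worm_colorable V E \<and> W_minus_K3 V E = k"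
  \<comment> \<open>The construction works for every \<open>k\<close>.\<close>
proof -
  let ?V = "to_nat ` blowup_vertices k" and ?E = "relabel_edges to_nat (blowup_edges k)"
  have "simple_graph ?V ?E"
    by (rule simple_graph_relabel[OF inj_to_nat simple_graph_blowup])
  moreover have "K3_worm_colorable ?V ?E"
    using blowup_coloring_worm K3_worm_colorable_relabel_iff[OF inj_to_nat]
    unfolding K3_worm_colorable_def by blast
  moreover have "W_minus_K3 ?V ?E = k"
    using W_minus_K3_relabel[OF inj_to_nat, of "blowup_vertices k" "blowup_edges k"]
    by (simp add: W_minus_K3_blowup)
  ultimately show ?thesis by blast
qed

end
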